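(* Let $F\in[0,1]$ and $0\le p\le F$, and let $F'_{\min}(p,F)=\min\{F'_{00}(\rho_1\otimes\rho_2):\rho_1,\rho_2\in S_{p,F}\}$. Then $$F'_{\min}(p,F)\ge\frac{p(2F-p)}{1+(1-p)^2}.$$
   Context: For qubit registers $(R,T)$, $|\Psi_{ij}\rangle_{RT}=(I_R\otimes(X^iZ^j)_T)\tfrac1{\sqrt2}(|00\rangle+|11\rangle)$. $S_{p,F}$ is the set of two-qubit density operators $\rho$ with $\rho=p|\Psi_{00}\rangle\langle\Psi_{00}|+(1-p)\sigma$ for some density operator $\sigma$ and $\langle\Psi_{00}|\rho|\Psi_{00}\rangle=F$. For $\rho_1$ on $(A_1,B_1)$ and $\rho_2$ on $(A_2,B_2)$: $p'_{ij}(\rho_1\otimes\rho_2)=\mathrm{Tr}[|\Psi_{ij}\rangle\langle\Psi_{ij}|_{A_1A_2}\rho_1\otimes\rho_2]$ is the probability of Bell-state measurement outcome $ij$ on $(A_1,A_2)$, and $F'_{ij}(\rho_1\otimes\rho_2)=\frac1{p'_{ij}}\mathrm{Tr}[|\Psi_{ij}\rangle\langle\Psi_{ij}|_{B_1B_2}|\Psi_{ij}\rangle\langle\Psi_{ij}|_{A_1A_2}\rho_1\otimes\rho_2]$ is the postselected end-to-end fidelity. *)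

theory Defs
  imports Complex_Main
begin

text \<open>Qubit basis indexed by bool (False = 0, True = 1). A two-qubit register pair (R,T)
  has basis index (r,t) :: bool \<times> bool. Operators are functions row \<Rightarrow> col \<Rightarrow> complex.\<close>

type_synonym 'i op = "'i \<Rightarrow> 'i \<Rightarrow> complex"
type_synonym 'i ket = "'i \<Rightarrow> complex"

definition mmul :: "('i::finite) op \<Rightarrow> 'i op \<Rightarrow> 'i op" where
  "mmul A B = (\<lambda>x y. \<Sum>z\<in>UNIV. A x z * B z y)"

definition idop :: "'i op" where
  "idop = (\<lambda>x y. if x = y then 1 else 0)"

definition trace_op :: "('i::finite) op \<Rightarrow> complex" where
  "trace_op A = (\<Sum>x\<in>UNIV. A x x)"

definition pauliX :: "bool op" where
  "pauliX = (\<lambda>x y. if x \<noteq> y then 1 else 0)"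

definition pauliZ :: "bool op" where
  "pauliZ = (\<lambda>x y. if x = y then (if x then -1 else 1) else 0)"

definition pauli :: "bool \<Rightarrow> bool \<Rightarrow> bool op" where
  "pauli i j = mmul (if i then pauliX else idop) (if j then pauliZ else idop)"

definition phi_plus :: "(bool \<times> bool) ket" where
  "phi_plus = (\<lambda>(r,t). if r = t then complex_of_real (1 / sqrt 2) else 0)"

definition bell :: "bool \<Rightarrow> bool \<Rightarrow> (bool \<times> bool) ket" where
  "bell i j = (\<lambda>(r,t). \<Sum>t'\<in>UNIV. pauli i j t t' * phi_plus (r,t'))"

definition proj :: "'i ket \<Rightarrow> 'i op" where
  "proj v = (\<lambda>x y. v x * cnj (v y))"

definition expect :: "('i::finite) ket \<Rightarrow> 'i op \<Rightarrow> complex" where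
  "expect v A = (\<Sum>x\<in>UNIV. \<Sum>y\<in>UNIV. cnj (v x) * A x y * v y)"

definition density_op :: "('i::finite) op \<Rightarrow> bool" where
  "density_op \<rho> \<longleftrightarrow> (\<forall>x y. \<rho> x y = cnj (\<rho> y x))
     \<and> (\<forall>v. Im (expect v \<rho>) = 0 \<and> Re (expect v \<rho>) \<ge> 0)
     \<and> trace_op \<rho> = 1"

definition S_set :: "real \<Rightarrow> real \<Rightarrow> (bool \<times> bool) op set" where
  "S_set p F = {\<rho>. density_op \<rho>
      \<and> (\<exists>\<sigma>. density_op \<sigma> \<and>
            \<rho> = (\<lambda>x y. complex_of_real p * proj (bell False False) x y
                        + complex_of_real (1 - p) * \<sigma> x y))
      \<and> expect (bell False False) \<rho> = complex_of_real F}"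

text \<open>Four-register system indexed ((a1,b1),(a2,b2)) for registers (A1,B1,A2,B2).\<close>
type_synonym idx4 = "(bool \<times> bool) \<times> (bool \<times> bool)"

definition tensor :: "(bool \<times> bool) op \<Rightarrow> (bool \<times> bool) op \<Rightarrow> idx4 op" where
  "tensor \<rho>1 \<rho>2 = (\<lambda>(x1,x2) (y1,y2). \<rho>1 x1 y1 * \<rho>2 x2 y2)"

definition on_A :: "(bool \<times> bool) op \<Rightarrow> idx4 op" where
  "on_A P = (\<lambda>((a1,b1),(a2,b2)) ((a1',b1'),(a2',b2')).
      P (a1,a2) (a1',a2') * (if b1 = b1' \<and> b2 = b2' then 1 else 0))"

definition on_B :: "(bool \<times> bool) op \<Rightarrow> idx4 op" where
  "on_B P = (\<lambda>((a1,b1),(a2,b2)) ((a1',b1'),(a2',b2')).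
      P (b1,b2) (b1',b2') * (if a1 = a1' \<and> a2 = a2' then 1 else 0))"

definition p_out :: "bool \<Rightarrow> bool \<Rightarrow> (bool \<times> bool) op \<Rightarrow> (bool \<times> bool) op \<Rightarrow> real" where
  "p_out i j \<rho>1 \<rho>2 = Re (trace_op (mmul (on_A (proj (bell i j))) (tensor \<rho>1 \<rho>2)))"

definition F_out :: "bool \<Rightarrow> bool \<Rightarrow> (bool \<times> bool) op \<Rightarrow> (bool \<times> bool) op \<Rightarrow> real" where
  "F_out i j \<rho>1 \<rho>2 = Re (trace_op (mmul (on_B (proj (bell i j)))
        (mmul (on_A (proj (bell i j))) (tensor \<rho>1 \<rho>2)))) / p_out i j \<rho>1 \<rho>2"

end

theory Submission
  imports Defs
begin

(* Both quantities in the postselected fidelity are values of the pairing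
   <A, B> = sum_{x,y} A x y * B x y = tr (A B^T): the unnormalised fidelity is <rho1, rho2> / 4
   and the success probability is <tr_B rho1, tr_B rho2> / 2.  Writing rho_i = p Phi + (1 - p) sigma_i
   and using <Phi, rho_i> = F, they become (2pF - p^2 + (1 - p)^2 s) / 4 and
   (p - p^2/2 + (1 - p)^2 t) / 2 with s = <sigma1, sigma2> and t = <tr_B sigma1, tr_B sigma2>.
   The pairing of two positive semidefinite operators is nonnegative, and that of two qubit density
   operators is at most 1, so s >= 0 and t <= 1; these two extremes give the bound. *)

lemma if_zero_distribs:
  "(a::complex) * (if P then b else 0) = (if P then a * b else 0)"
  "(if P then b else 0) * (a::complex) = (if P then b * a else 0)"
  "cnj (if P then b else 0) = (if P then cnj b else 0)"
  "(\<Sum>y\<in>Y. if P then f y else 0) = (if P then (\<Sum>y\<in>Y. f y) else 0)"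
  by simp_all

lemma sum_UNIV_bool: "(\<Sum>x\<in>UNIV. f x) = f False + f True"
  by (simp add: UNIV_bool)

lemma sum_UNIV_prod:
  "(\<Sum>x\<in>UNIV. f x) = (\<Sum>a\<in>(UNIV::'a::finite set). \<Sum>b\<in>(UNIV::'b::finite set). f (a, b))"
  by (simp add: sum.cartesian_product flip: UNIV_Times_UNIV)

definition hermitian :: "('i::finite) op \<Rightarrow> bool" where
  "hermitian A \<longleftrightarrow> (\<forall>x y. A x y = cnj (A y x))"

definition psd :: "('i::finite) op \<Rightarrow> bool" where
  "psd A \<longleftrightarrow> hermitian A \<and> (\<forall>v. Im (expect v A) = 0 \<and> 0 \<le> Re (expect v A))"

lemma density_op_psd: "density_op \<rho> \<Longrightarrow> psd \<rho>"
  unfolding density_op_def psd_def hermitian_def by blast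

lemma density_op_trace: "density_op \<rho> \<Longrightarrow> trace_op \<rho> = 1"
  unfolding density_op_def by blast

lemma psd_entry_cnj: "psd A \<Longrightarrow> A x y = cnj (A y x)"
  unfolding psd_def hermitian_def by blast

lemma psd_expect_real: "psd A \<Longrightarrow> Im (expect v A) = 0"
  unfolding psd_def by blast

lemma psd_expect_nonneg: "psd A \<Longrightarrow> 0 \<le> Re (expect v A)"
  unfolding psd_def by blast

lemma hermitian_idop: "hermitian idop"
  by (simp add: hermitian_def idop_def)

lemma hermitian_diff: "hermitian A \<Longrightarrow> hermitian B \<Longrightarrow> hermitian (\<lambda>x y. A x y - B x y)"
  unfolding hermitian_def by (metis complex_cnj_diff)

lemma expect_indicator: "expect (\<lambda>z. if z = x then 1 else 0) A = A x x"
  by (simp add: expect_def if_zero_distribs sum.delta)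

lemma psd_diag_real_nonneg:
  assumes "psd A"
  shows "A x x = of_real (Re (A x x))" and "0 \<le> Re (A x x)"
  using psd_expect_real[OF assms] psd_expect_nonneg[OF assms]
  by (metis complex_is_Real_iff expect_indicator of_real_Re)+

lemma expect_add_point:
  fixes A :: "('i::finite) op"
  shows "expect (\<lambda>z. w z + (if z = x then s else 0)) A
     = expect w A + (\<Sum>z\<in>UNIV. cnj (w z) * A z x) * s + cnj s * (\<Sum>z\<in>UNIV. A x z * w z)
       + cnj s * A x x * s"
  by (simp add: expect_def ring_distribs sum.distrib if_zero_distribs sum.delta
      sum_distrib_left sum_distrib_right mult.assoc)

lemma psd_zero_diag_row:
  assumes A: "psd A" and zero: "A x x = 0"
  shows "A x y = 0"
proof (rule ccontr)
  define c where "c = A x y"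
  assume "A x y \<noteq> 0"
  then have c_pos: "0 < (cmod c)\<^sup>2" by (simp add: c_def)
  have "0 \<le> Re (A y y) - 2 * R * (cmod c)\<^sup>2" for R
  proof -
    let ?v = "\<lambda>z. (if z = y then 1 else 0) + (if z = x then - c * of_real R else 0)"
    have "A x y = c" "A y x = cnj c" using psd_entry_cnj[OF A, of y x] by (simp_all add: c_def)
    then have "expect ?v A = A y y - of_real (2 * R) * (cnj c * c)"
      unfolding expect_add_point using zero
      by (simp add: if_zero_distribs sum.delta expect_indicator)
    moreover have "0 \<le> Re (expect ?v A)" by (rule psd_expect_nonneg[OF A])
    moreover have "Re (cnj c * c) = (cmod c)\<^sup>2"
      by (simp add: cmod_power2 flip: power2_eq_square)
    ultimately show ?thesis by simp
  qed
  from this[of "(Re (A y y) + 1) / (2 * (cmod c)\<^sup>2)"] show False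
    using c_pos by (simp add: field_simps)
qed

definition schur_compl :: "('i::finite) op \<Rightarrow> 'i \<Rightarrow> 'i op" where
  "schur_compl A x0 = (\<lambda>x y. A x y - A x x0 * A x0 y / A x0 x0)"

lemma expect_schur_compl:
  "expect w (schur_compl A x0)
     = expect w A - (\<Sum>z\<in>UNIV. cnj (w z) * A z x0) * (\<Sum>z\<in>UNIV. A x0 z * w z) / A x0 x0"
  by (simp add: expect_def schur_compl_def algebra_simps sum_subtractf sum_distrib_left
      sum_distrib_right sum_divide_distrib)

lemma psd_schur_compl:
  assumes A: "psd A" and nonzero: "A x0 x0 \<noteq> 0"
  shows "psd (schur_compl A x0)"
  unfolding psd_def
proof (intro conjI allI)
  show "hermitian (schur_compl A x0)"
    using psd_entry_cnj[OF A] psd_diag_real_nonneg(1)[OF A, of x0]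
    unfolding hermitian_def schur_compl_def
    by (metis complex_cnj_divide complex_cnj_mult complex_cnj_diff complex_cnj_complex_of_real
        mult.commute)
  fix w
  define c where "c = (\<Sum>z\<in>UNIV. A x0 z * w z)"
  have "(\<Sum>z\<in>UNIV. cnj (w z) * A z x0) = cnj c"
    unfolding c_def by (simp add: psd_entry_cnj[OF A, of _ x0] mult.commute)
  then have "expect w (schur_compl A x0)
      = expect (\<lambda>z. w z + (if z = x0 then - c / A x0 x0 else 0)) A"
    unfolding expect_schur_compl expect_add_point c_def[symmetric]
    using nonzero psd_diag_real_nonneg(1)[OF A, of x0]
    by (simp add: field_simps)
  then show "Im (expect w (schur_compl A x0)) = 0" "0 \<le> Re (expect w (schur_compl A x0))"
    using psd_expect_real[OF A] psd_expect_nonneg[OF A] by simp_all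
qed

definition pairing :: "('i::finite) op \<Rightarrow> 'i op \<Rightarrow> complex" where
  "pairing A B = (\<Sum>x\<in>UNIV. \<Sum>y\<in>UNIV. A x y * B x y)"

lemma pairing_commute: "pairing A B = pairing B A"
  by (simp add: pairing_def mult.commute)

lemma pairing_schur_compl:
  assumes "hermitian A"
  shows "pairing A B = pairing (schur_compl A x0) B + expect (A x0) B / A x0 x0"
proof -
  have "cnj (A x0 x) = A x x0" for x using assms unfolding hermitian_def by (metis complex_cnj_cnj)
  then show ?thesis
    by (simp add: pairing_def schur_compl_def expect_def algebra_simps sum_subtractf
        sum.distrib sum_divide_distrib)
qed

text \<open>Induction on the rows where \<open>A\<close> may be nonzero: splitting off the rank-one part
  \<open>A x x0 * A x0 y / A x0 x0\<close> leaves the Schur complement, which is positive semidefinite and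
  vanishes on row \<open>x0\<close>, while the rank-one part pairs with \<open>B\<close> to a value of the
  quadratic form of \<open>B\<close>.\<close>

lemma pairing_psd_nonneg:
  fixes A B :: "('i::finite) op"
  assumes "psd A" and B: "psd B"
  shows "0 \<le> Re (pairing A B)"
proof -
  have "0 \<le> Re (pairing A B)" if "finite S" "psd A" "\<And>x y. x \<notin> S \<Longrightarrow> A x y = 0" for S A
    using that
  proof (induction S arbitrary: A rule: finite_induct)
    case empty
    then show ?case by (simp add: pairing_def)
  next
    case (insert x0 S)
    note A = \<open>psd A\<close>
    show ?case
    proof (cases "A x0 x0 = 0")
      case True
      then have "A x y = 0" if "x \<notin> S" for x y
        using psd_zero_diag_row[OF A] insert.prems(2) that by (cases "x = x0") auto
      then show ?thesis using insert.IH A by blast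
    next
      case False
      have "schur_compl A x0 x y = 0" if "x \<notin> S" for x y
        using insert.prems(2)[of x] that False
        by (cases "x = x0") (simp_all add: schur_compl_def)
      then have "0 \<le> Re (pairing (schur_compl A x0) B)"
        using insert.IH[OF psd_schur_compl[OF A False]] by blast
      moreover have "0 \<le> Re (expect (A x0) B / A x0 x0)"
        using psd_diag_real_nonneg[OF A, of x0] psd_expect_real[OF B] psd_expect_nonneg[OF B]
        by (metis Re_divide_of_real divide_nonneg_nonneg)
      ultimately show ?thesis
        using pairing_schur_compl[of A B x0] A unfolding psd_def by simp
    qed
  qed
  from this[of UNIV A] show ?thesis using assms by simp
qed

definition mixture :: "real \<Rightarrow> ('i::finite) op \<Rightarrow> 'i op \<Rightarrow> 'i op" where
  "mixture p P \<sigma> = (\<lambda>x y. of_real p * P x y + of_real (1 - p) * \<sigma> x y)"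

lemma pairing_mixture_left:
  "pairing (mixture p P \<sigma>) B = of_real p * pairing P B + of_real (1 - p) * pairing \<sigma> B"
  by (simp add: pairing_def mixture_def distrib_right sum.distrib sum_distrib_left mult.assoc)

lemma pairing_mixture_right:
  "pairing B (mixture p P \<sigma>) = of_real p * pairing B P + of_real (1 - p) * pairing B \<sigma>"
  by (simp add: pairing_commute[of B] pairing_mixture_left)

lemma pairing_mixtures:
  assumes "pairing P P = of_real c"
    and "pairing P (mixture p P \<sigma>1) = of_real f" and "pairing P (mixture p P \<sigma>2) = of_real f"
  shows "pairing (mixture p P \<sigma>1) (mixture p P \<sigma>2)
    = of_real (2 * p * f - p\<^sup>2 * c) + of_real ((1 - p)\<^sup>2) * pairing \<sigma>1 \<sigma>2"
proof -
  have overlap: "of_real (1 - p) * pairing P \<sigma> = of_real (f - p * c)"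
    if "pairing P (mixture p P \<sigma>) = of_real f" for \<sigma>
    using that assms(1) by (simp add: pairing_mixture_right algebra_simps)
  have "pairing (mixture p P \<sigma>1) (mixture p P \<sigma>2)
      = of_real p * pairing P (mixture p P \<sigma>2) + of_real (1 - p) * pairing \<sigma>1 (mixture p P \<sigma>2)"
    by (rule pairing_mixture_left)
  also have "\<dots> = of_real p * of_real f
      + of_real (1 - p) * (of_real p * pairing \<sigma>1 P + of_real (1 - p) * pairing \<sigma>1 \<sigma>2)"
    using assms(3) by (simp only: pairing_mixture_right[of \<sigma>1])
  also have "\<dots> = of_real p * of_real f + of_real p * (of_real (1 - p) * pairing P \<sigma>1)
      + of_real ((1 - p)\<^sup>2) * pairing \<sigma>1 \<sigma>2"
    by (simp add: pairing_commute[of \<sigma>1 P] algebra_simps power2_eq_square)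
  also have "\<dots> = of_real (2 * p * f - p\<^sup>2 * c) + of_real ((1 - p)\<^sup>2) * pairing \<sigma>1 \<sigma>2"
    unfolding overlap[OF assms(2)] by (simp add: algebra_simps power2_eq_square)
  finally show ?thesis .
qed

definition partial_trace :: "('a::finite \<times> 'b::finite) op \<Rightarrow> 'a op" where
  "partial_trace \<rho> = (\<lambda>a a'. \<Sum>b\<in>UNIV. \<rho> (a, b) (a', b))"

lemma partial_trace_mixture:
  "partial_trace (mixture p P \<sigma>) = mixture p (partial_trace P) (partial_trace \<sigma>)"
  by (simp add: partial_trace_def mixture_def fun_eq_iff sum.distrib sum_distrib_left)

lemma trace_partial_trace: "trace_op (partial_trace \<rho>) = trace_op \<rho>"
  by (simp add: trace_op_def partial_trace_def sum_UNIV_prod[of "\<lambda>x. \<rho> x x"])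

lemma expect_partial_trace:
  "expect w (partial_trace \<rho>) = (\<Sum>b\<in>UNIV. expect (\<lambda>(a, b'). if b' = b then w a else 0) \<rho>)"
proof -
  have "expect w (partial_trace \<rho>)
      = (\<Sum>a\<in>UNIV. \<Sum>a'\<in>UNIV. \<Sum>b\<in>UNIV. cnj (w a) * \<rho> (a, b) (a', b) * w a')"
    by (simp add: expect_def partial_trace_def sum_distrib_left sum_distrib_right)
  also have "\<dots> = (\<Sum>b\<in>UNIV. \<Sum>a\<in>UNIV. \<Sum>a'\<in>UNIV. cnj (w a) * \<rho> (a, b) (a', b) * w a')"
    by (simp only: sum.swap[where A = "UNIV :: 'a set" and B = "UNIV :: 'b set"])
  also have "\<dots> = (\<Sum>b\<in>UNIV. expect (\<lambda>(a, b'). if b' = b then w a else 0) \<rho>)"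
    by (simp add: expect_def sum_UNIV_prod[of "\<lambda>x. f x" for f] if_zero_distribs sum.delta)
  finally show ?thesis .
qed

lemma psd_partial_trace:
  assumes "psd \<rho>"
  shows "psd (partial_trace \<rho>)"
  unfolding psd_def hermitian_def expect_partial_trace
proof (intro conjI allI)
  show "partial_trace \<rho> a a' = cnj (partial_trace \<rho> a' a)" for a a'
    using psd_entry_cnj[OF assms, of "(a', b)" "(a, b)" for b] by (simp add: partial_trace_def)
  show "Im (\<Sum>b\<in>UNIV. expect (\<lambda>(a, b'). if b' = b then w a else 0) \<rho>) = 0"
    "0 \<le> Re (\<Sum>b\<in>UNIV. expect (\<lambda>(a, b'). if b' = b then w a else 0) \<rho>)" for w
    using psd_expect_real[OF assms] psd_expect_nonneg[OF assms] by (simp_all add: sum_nonneg)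
qed

lemma pairing_idop_minus: "pairing (\<lambda>x y. idop x y - A x y) B = trace_op B - pairing A B"
  by (simp add: pairing_def trace_op_def idop_def left_diff_distrib sum_subtractf
      if_zero_distribs sum.delta)

text \<open>For a qubit of trace 1, \<open>I - t\<close> is \<open>t\<close> seen through the spin flip
  \<open>(w0, w1) \<mapsto> (cnj w1, - cnj w0)\<close>, an identity special to dimension 2.\<close>

lemma psd_idop_minus_qubit:
  fixes t :: "bool op"
  assumes t: "psd t" and "trace_op t = 1"
  shows "psd (\<lambda>a a'. idop a a' - t a a')"
proof -
  have herm: "hermitian (\<lambda>a a'. idop a a' - t a a')"
    using t unfolding psd_def by (intro hermitian_diff hermitian_idop) simp
  have t11: "t True True = 1 - t False False"
    using assms(2) unfolding trace_op_def sum_UNIV_bool by (simp add: eq_diff_eq add.commute)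
  have flip: "expect w (\<lambda>a a'. idop a a' - t a a')
      = expect (\<lambda>a. if a then - cnj (w False) else cnj (w True)) t" for w
    by (simp add: expect_def idop_def sum_UNIV_bool algebra_simps t11)
  show ?thesis
    unfolding psd_def flip using herm psd_expect_real[OF t] psd_expect_nonneg[OF t] by simp
qed

lemma pairing_qubit_states_le_one:
  fixes t u :: "bool op"
  assumes "psd t" "trace_op t = 1" "psd u" "trace_op u = 1"
  shows "Re (pairing t u) \<le> 1"
proof -
  have "pairing (\<lambda>a a'. idop a a' - t a a') u = 1 - pairing t u"
    using assms(4) by (simp add: pairing_idop_minus)
  then show ?thesis
    using pairing_psd_nonneg[OF psd_idop_minus_qubit[OF assms(1,2)] assms(3)] by simp
qed

definition bell00_proj :: "(bool \<times> bool) op" where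
  "bell00_proj = (\<lambda>x y. if fst x = snd x \<and> fst y = snd y then 1/2 else 0)"

lemma bell00_eq: "bell False False = (\<lambda>x. if fst x = snd x then of_real (1 / sqrt 2) else 0)"
  by (auto simp: fun_eq_iff bell_def pauli_def mmul_def idop_def phi_plus_def sum_UNIV_bool)

lemma proj_bell00: "proj (bell False False) = bell00_proj"
proof -
  have "complex_of_real (1 / sqrt 2) * complex_of_real (1 / sqrt 2) = 1/2"
    by (simp flip: of_real_mult)
  then show ?thesis by (auto simp: proj_def bell00_eq bell00_proj_def fun_eq_iff)
qed

lemma sum_UNIV_bool_prod:
  "(\<Sum>x\<in>UNIV. f x) = f (False, False) + f (False, True) + f (True, False) + f (True, True)"
  by (simp add: sum_UNIV_prod[of f] sum_UNIV_bool add.assoc)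

lemmas sum_UNIV_idx4 = sum_UNIV_prod[where 'a = "bool \<times> bool" and 'b = "bool \<times> bool"]

lemma pairing_bell00_proj: "pairing bell00_proj \<rho> = expect (bell False False) \<rho>"
proof -
  have "cnj (complex_of_real (1 / sqrt 2)) * complex_of_real (1 / sqrt 2) = 1/2"
    by (simp flip: of_real_mult)
  then show ?thesis
    by (simp add: pairing_def expect_def bell00_eq bell00_proj_def sum_UNIV_bool_prod algebra_simps)
qed

lemma pairing_bell00_proj_self: "pairing bell00_proj bell00_proj = 1"
  by (simp add: pairing_def bell00_proj_def sum_UNIV_bool_prod)

lemma on_A_bell00_mmul:
  "mmul (on_A bell00_proj) T ((a1, b1), (a2, b2)) y
     = (if a1 = a2 then (T ((False, b1), (False, b2)) y + T ((True, b1), (True, b2)) y) / 2 else 0)"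
  by (cases a1; cases a2; cases b1; cases b2)
    (simp_all add: mmul_def sum_UNIV_idx4 sum_UNIV_bool_prod on_A_def bell00_proj_def)

lemma trace_on_A_bell00_tensor:
  "trace_op (mmul (on_A bell00_proj) (tensor \<rho>1 \<rho>2))
     = pairing (partial_trace \<rho>1) (partial_trace \<rho>2) / 2"
  unfolding trace_op_def sum_UNIV_idx4 sum_UNIV_bool_prod on_A_bell00_mmul
  by (simp add: pairing_def partial_trace_def sum_UNIV_bool sum_UNIV_bool_prod tensor_def
      algebra_simps add_divide_distrib)

lemma trace_on_B_on_A_bell00_tensor:
  "trace_op (mmul (on_B bell00_proj) (mmul (on_A bell00_proj) (tensor \<rho>1 \<rho>2)))
     = pairing \<rho>1 \<rho>2 / 4"
  unfolding trace_op_def mmul_def[of "on_B bell00_proj"] sum_UNIV_idx4 sum_UNIV_bool_prod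
    on_A_bell00_mmul
  by (simp add: pairing_def on_B_def bell00_proj_def sum_UNIV_bool_prod tensor_def algebra_simps
      add_divide_distrib)

lemma p_out00_eq:
  "p_out False False \<rho>1 \<rho>2 = Re (pairing (partial_trace \<rho>1) (partial_trace \<rho>2)) / 2"
  by (simp add: p_out_def proj_bell00 trace_on_A_bell00_tensor)

lemma F_out00_eq:
  "F_out False False \<rho>1 \<rho>2 = (Re (pairing \<rho>1 \<rho>2) / 4) / p_out False False \<rho>1 \<rho>2"
  by (simp add: F_out_def proj_bell00 trace_on_B_on_A_bell00_tensor)

lemma trace_bell00_proj: "trace_op bell00_proj = 1"
  by (simp add: trace_op_def bell00_proj_def sum_UNIV_bool_prod)

lemma pairing_partial_trace_bell00_proj: "pairing (partial_trace bell00_proj) A = trace_op A / 2"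
  by (simp add: pairing_def partial_trace_def bell00_proj_def trace_op_def sum_UNIV_bool
      add_divide_distrib)

lemma S_set_mixture:
  assumes "\<rho> \<in> S_set p F"
  obtains \<sigma> where "density_op \<rho>" "density_op \<sigma>" "\<rho> = mixture p bell00_proj \<sigma>"
    "pairing bell00_proj \<rho> = of_real F"
  using assms unfolding S_set_def proj_bell00 pairing_bell00_proj mixture_def by blast

lemma fidelity_ratio_bound:
  fixes p F s t :: real
  assumes "0 \<le> p" "p \<le> F" "F \<le> 1" "0 \<le> s" "0 \<le> t" "t \<le> 1"
  shows "p * (2 * F - p) / (1 + (1 - p)\<^sup>2)
    \<le> ((2 * p * F - p\<^sup>2 + (1 - p)\<^sup>2 * s) / 4) / ((p - p\<^sup>2 / 2 + (1 - p)\<^sup>2 * t) / 2)"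
proof (cases "p = 0")
  case True
  then show ?thesis using assms by simp
next
  case False
  define D where "D = p - p\<^sup>2 / 2 + (1 - p)\<^sup>2 * t"
  have p: "0 < p" "p \<le> 1" using False assms by auto
  have "p\<^sup>2 \<le> p" using p by (simp add: power2_eq_square mult_left_le)
  then have D_pos: "0 < D" using p assms by (simp add: D_def add_pos_nonneg)
  have "(1 - p)\<^sup>2 * t \<le> (1 - p)\<^sup>2" using assms by (simp add: mult_left_le)
  then have D_le: "2 * D \<le> 1 + (1 - p)\<^sup>2" by (simp add: D_def power2_eq_square algebra_simps)
  have "0 \<le> p * (2 * F - p)" using assms by simp
  then have "p * (2 * F - p) / (1 + (1 - p)\<^sup>2) \<le> p * (2 * F - p) / (2 * D)"
    using D_pos D_le by (intro divide_left_mono) auto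
  also have "\<dots> \<le> (2 * p * F - p\<^sup>2 + (1 - p)\<^sup>2 * s) / (2 * D)"
  proof (rule divide_right_mono)
    have "p * (2 * F - p) = 2 * p * F - p\<^sup>2" by (simp add: power2_eq_square algebra_simps)
    moreover have "0 \<le> (1 - p)\<^sup>2 * s" using assms by simp
    ultimately show "p * (2 * F - p) \<le> 2 * p * F - p\<^sup>2 + (1 - p)\<^sup>2 * s" by linarith
  qed (use D_pos in simp)
  also have "\<dots> = ((2 * p * F - p\<^sup>2 + (1 - p)\<^sup>2 * s) / 4) / (D / 2)"
    using D_pos by (simp add: field_simps)
  finally show ?thesis by (simp only: D_def)
qed

lemma pairing_bell00_mixtures:
  assumes "\<rho>1 = mixture p bell00_proj \<sigma>1" "pairing bell00_proj \<rho>1 = of_real F"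
    and "\<rho>2 = mixture p bell00_proj \<sigma>2" "pairing bell00_proj \<rho>2 = of_real F"
  shows "Re (pairing \<rho>1 \<rho>2) = 2 * p * F - p\<^sup>2 + (1 - p)\<^sup>2 * Re (pairing \<sigma>1 \<sigma>2)"
  using pairing_mixtures[of bell00_proj 1 p \<sigma>1 F \<sigma>2] assms
  by (simp add: pairing_bell00_proj_self)

lemma pairing_partial_trace_bell00_mixtures:
  assumes "\<rho>1 = mixture p bell00_proj \<sigma>1" "density_op \<rho>1"
    and "\<rho>2 = mixture p bell00_proj \<sigma>2" "density_op \<rho>2"
  shows "Re (pairing (partial_trace \<rho>1) (partial_trace \<rho>2))
    = p - p\<^sup>2 / 2 + (1 - p)\<^sup>2 * Re (pairing (partial_trace \<sigma>1) (partial_trace \<sigma>2))"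
proof -
  have half: "pairing (partial_trace bell00_proj) (partial_trace \<rho>) = of_real (1 / 2)"
    if "density_op \<rho>" for \<rho>
    using that by (simp add: pairing_partial_trace_bell00_proj trace_partial_trace density_op_trace)
  have "pairing (partial_trace bell00_proj) (partial_trace bell00_proj) = of_real (1 / 2)"
    by (simp add: pairing_partial_trace_bell00_proj trace_partial_trace trace_bell00_proj)
  from pairing_mixtures[OF this, where p = p and f = "1 / 2"] show ?thesis
    using half[OF assms(2)] half[OF assms(4)] assms(1,3)
    by (simp add: partial_trace_mixture power2_eq_square)
qed

theorem proposition4:
  fixes p F :: real and \<rho>1 \<rho>2 :: "(bool \<times> bool) op"
  assumes "0 \<le> F" and "F \<le> 1" and "0 \<le> p" and "p \<le> F"
    and "\<rho>1 \<in> S_set p F" and "\<rho>2 \<in> S_set p F"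
  shows "F_out False False \<rho>1 \<rho>2 \<ge> p * (2 * F - p) / (1 + (1 - p)^2)"
proof -
  obtain \<sigma>1 where \<rho>1: "density_op \<rho>1" "density_op \<sigma>1" "\<rho>1 = mixture p bell00_proj \<sigma>1"
    "pairing bell00_proj \<rho>1 = of_real F"
    using S_set_mixture[OF assms(5)] by blast
  obtain \<sigma>2 where \<rho>2: "density_op \<rho>2" "density_op \<sigma>2" "\<rho>2 = mixture p bell00_proj \<sigma>2"
    "pairing bell00_proj \<rho>2 = of_real F"
    using S_set_mixture[OF assms(6)] by blast
  define s where "s = Re (pairing \<sigma>1 \<sigma>2)"
  define t where "t = Re (pairing (partial_trace \<sigma>1) (partial_trace \<sigma>2))"
  have "F_out False False \<rho>1 \<rho>2
      = ((2 * p * F - p\<^sup>2 + (1 - p)\<^sup>2 * s) / 4) / ((p - p\<^sup>2 / 2 + (1 - p)\<^sup>2 * t) / 2)"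
    unfolding F_out00_eq p_out00_eq s_def t_def
    using pairing_bell00_mixtures[OF \<rho>1(3,4) \<rho>2(3,4)]
      pairing_partial_trace_bell00_mixtures[OF \<rho>1(3,1) \<rho>2(3,1)] by simp
  moreover have "0 \<le> s" "0 \<le> t" "t \<le> 1"
    using \<rho>1(2) \<rho>2(2) unfolding s_def t_def
    by (simp_all add: pairing_psd_nonneg psd_partial_trace density_op_psd
        pairing_qubit_states_le_one trace_partial_trace density_op_trace)
  ultimately show ?thesis
    using fidelity_ratio_bound[of p F s t] assms(1-4) by simp
qed

end
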